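(* Let $f,g$ be entire functions of finite order satisfying $ff^\natural=gg^\natural$ and $f'(f')^\natural=g'(g')^\natural$ on $\mathbb C$. Then there is $\alpha\in\mathbb C$ with $|\alpha|=1$ such that $f=\alpha g$ or $f=\alpha g^\natural$.
   Context: For an entire function $h$, its involution is $h^\natural(z):=\overline{h(-\bar z)}$. An entire function $h$ has finite order if $\limsup_{r\to\infty}\frac{\log\log M_h(r)}{\log r}<\infty$, where $M_h(r)=\max_{|z|=r}|h(z)|$. *)

theory Defs
  imports "HOL-Complex_Analysis.Complex_Analysis" "HOL-Library.Liminf_Limsup"
begin

definition involution :: "(complex \<Rightarrow> complex) \<Rightarrow> complex \<Rightarrow> complex" where
  "involution h = (\<lambda>z. cnj (h (- cnj z)))"

definition max_modulus :: "(complex \<Rightarrow> complex) \<Rightarrow> real \<Rightarrow> real" where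
  "max_modulus h r = (SUP z\<in>sphere 0 r. norm (h z))"

definition finite_order :: "(complex \<Rightarrow> complex) \<Rightarrow> bool" where
  "finite_order h \<longleftrightarrow>
     Limsup at_top (\<lambda>r::real. ereal (ln (ln (max_modulus h r)) / ln r)) < \<infinity>"

end

theory Submission
  imports Defs
begin

text \<open>
  The product of the Wronskians \<open>W(f,g) = f'g - fg'\<close> and \<open>W(f,g\<^sup>\<natural>)\<close> equals
  \<open>f'\<^sup>2(gg\<^sup>\<natural> - ff\<^sup>\<natural>) - ff'((gg\<^sup>\<natural>)' - (ff\<^sup>\<natural>)') + f\<^sup>2(g'(g\<^sup>\<natural>)' - f'(f\<^sup>\<natural>)')\<close>,
  which vanishes by the hypotheses because \<open>(h\<^sup>\<natural>)' = -(h')\<^sup>\<natural>\<close>. Entire functions have no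
  zero divisors, so one Wronskian vanishes and \<open>g\<close> or \<open>g\<^sup>\<natural>\<close> is a constant multiple
  \<open>c f\<close>; then \<open>ff\<^sup>\<natural> = gg\<^sup>\<natural>\<close> forces \<open>|c| = 1\<close>.
\<close>

lemma involution_involution [simp]: "involution (involution h) = h"
  by (simp add: involution_def)

lemma involution_eq_0_iff: "(\<forall>z. involution h z = 0) \<longleftrightarrow> (\<forall>z. h z = 0)"
proof
  assume "\<forall>z. involution h z = 0"
  then have "involution h (- cnj z) = 0" for z by blast
  then show "\<forall>z. h z = 0" by (simp add: involution_def)
qed (simp add: involution_def)

lemma has_field_derivative_involution:
  assumes "(h has_field_derivative D) (at (- cnj z))"
  shows "(involution h has_field_derivative - cnj D) (at z)"
proof -
  have "((\<lambda>w. h (- w)) has_field_derivative - D) (at (cnj z))"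
    using DERIV_chain2[OF assms DERIV_minus[OF DERIV_ident]] by simp
  from has_field_derivative_cnj_cnj[OF this] show ?thesis
    by (simp add: involution_def o_def)
qed

lemma deriv_involution:
  assumes "h field_differentiable at (- cnj z)"
  shows "deriv (involution h) z = - involution (deriv h) z"
  using has_field_derivative_involution[of h "deriv h (- cnj z)" z] assms
  by (simp add: DERIV_imp_deriv DERIV_deriv_iff_field_differentiable involution_def)

lemma holomorphic_on_involution:
  assumes "h holomorphic_on UNIV"
  shows "involution h holomorphic_on UNIV"
  using has_field_derivative_involution[OF holomorphic_derivI[OF assms open_UNIV UNIV_I]]
  unfolding holomorphic_on_def field_differentiable_def
  by (meson has_field_derivative_at_within)

lemma holomorphic_mult_eq_0_imp:
  assumes "p holomorphic_on S" "q holomorphic_on S" "open S" "connected S"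
    and "\<And>z. z \<in> S \<Longrightarrow> p z * q z = 0"
  shows "(\<forall>z\<in>S. p z = 0) \<or> (\<forall>z\<in>S. q z = 0)"
proof (rule disjCI)
  assume "\<not> (\<forall>z\<in>S. q z = 0)"
  define U where "U = S \<inter> q -` (- {0})"
  have "open U"
    unfolding U_def using assms(2,3)
    by (intro continuous_open_preimage holomorphic_on_imp_continuous_on) auto
  moreover have "U \<noteq> {}" "U \<subseteq> S"
    using \<open>\<not> (\<forall>z\<in>S. q z = 0)\<close> by (auto simp: U_def)
  moreover have "\<And>z. z \<in> U \<Longrightarrow> p z = 0"
    using assms(5) by (auto simp: U_def)
  ultimately show "\<forall>z\<in>S. p z = 0"
    using analytic_continuation_open[of U S p "\<lambda>_. 0"] assms(1,3,4) by auto
qed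

lemma wronskian_eq_0_imp_proportional:
  assumes "p holomorphic_on S" "q holomorphic_on S" "open S" "connected S"
    and "z0 \<in> S" "p z0 \<noteq> 0"
    and "\<And>z. z \<in> S \<Longrightarrow> deriv p z * q z = p z * deriv q z"
  obtains c where "\<And>z. z \<in> S \<Longrightarrow> q z = c * p z"
proof -
  have "open (S \<inter> p -` (- {0}))"
    using assms(1,3) by (intro continuous_open_preimage holomorphic_on_imp_continuous_on) auto
  moreover have "z0 \<in> S \<inter> p -` (- {0})"
    using assms(5,6) by simp
  ultimately obtain r where "r > 0" and ball: "ball z0 r \<subseteq> S \<inter> p -` (- {0})"
    by (rule openE)
  have "\<exists>c. \<forall>z\<in>ball z0 r. q z / p z = c"
  proof (rule has_field_derivative_zero_constant)
    fix z assume "z \<in> ball z0 r"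
    with ball have "z \<in> S" "p z \<noteq> 0" by auto
    have "((\<lambda>z. q z / p z) has_field_derivative
        (deriv q z * p z - q z * deriv p z) / (p z * p z)) (at z)"
      using holomorphic_derivI[OF assms(1,3) \<open>z \<in> S\<close>] holomorphic_derivI[OF assms(2,3) \<open>z \<in> S\<close>]
        \<open>p z \<noteq> 0\<close> by (intro DERIV_divide) auto
    also have "deriv q z * p z - q z * deriv p z = 0"
      using assms(7)[OF \<open>z \<in> S\<close>] by (simp add: algebra_simps)
    finally show "((\<lambda>z. q z / p z) has_field_derivative 0) (at z within ball z0 r)"
      by (simp add: has_field_derivative_at_within)
  qed simp
  then obtain c where quotient: "\<And>z. z \<in> ball z0 r \<Longrightarrow> q z / p z = c" by blast
  have c: "q z = c * p z" if "z \<in> ball z0 r" for z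
  proof -
    have "p z \<noteq> 0" using ball that by auto
    with quotient[OF that] show ?thesis by (simp add: field_simps)
  qed
  have "q z = c * p z" if "z \<in> S" for z
  proof (rule analytic_continuation_open[of "ball z0 r" S q "\<lambda>z. c * p z"])
    show "(\<lambda>z. c * p z) holomorphic_on S"
      using assms(1) by (intro holomorphic_intros)
    show "ball z0 r \<subseteq> S" "ball z0 r \<noteq> {}"
      using ball \<open>r > 0\<close> by auto
  qed (use assms(2-4) c that in auto)
  then show thesis by (rule that)
qed

lemma wronskian_product_eq_0:
  fixes f f' F F' g g' G G' :: "'a :: comm_ring"
  assumes "f * F = g * G" "f' * F + f * F' = g' * G + g * G'" "f' * F' = g' * G'"
  shows "(f' * g - f * g') * (f' * G - f * G') = 0"
proof -
  have "(f' * g - f * g') * (f' * G - f * G')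
      = f' * f' * (g * G - f * F) - f * f' * ((g' * G + g * G') - (f' * F + f * F'))
        + f * f * (g' * G' - f' * F')"
    by (simp add: algebra_simps)
  then show ?thesis using assms by simp
qed

lemma entire_mult_involution_eq_0_imp:
  assumes "h holomorphic_on UNIV" and "\<And>z. h z * involution h z = 0"
  shows "h z = 0"
  using holomorphic_mult_eq_0_imp[OF assms(1) holomorphic_on_involution[OF assms(1)]
      open_UNIV connected_UNIV] assms(2) involution_eq_0_iff[of h]
  by blast

lemma entire_wronskian_eq_0_or_wronskian_involution_eq_0:
  assumes f: "f holomorphic_on UNIV" and g: "g holomorphic_on UNIV"
    and prod: "\<And>z. f z * involution f z = g z * involution g z"
    and deriv_prod: "\<And>z. deriv f z * involution (deriv f) z = deriv g z * involution (deriv g) z"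
  shows "(\<forall>z. deriv f z * g z = f z * deriv g z) \<or>
         (\<forall>z. deriv f z * involution g z = f z * deriv (involution g) z)"
proof -
  have differentiable: "h field_differentiable at w" if "h holomorphic_on UNIV" for h w
    using that holomorphic_on_imp_differentiable_at by blast
  have "(deriv f z * g z - f z * deriv g z) *
          (deriv f z * involution g z - f z * deriv (involution g) z) = 0" for z
  proof (rule wronskian_product_eq_0)
    have "(\<lambda>z. f z * involution f z) = (\<lambda>z. g z * involution g z)"
      using prod by blast
    then have "deriv (\<lambda>z. f z * involution f z) z = deriv (\<lambda>z. g z * involution g z) z"
      by simp
    then show "deriv f z * involution f z + f z * deriv (involution f) z
        = deriv g z * involution g z + g z * deriv (involution g) z"
      using differentiable f g holomorphic_on_involution[OF f] holomorphic_on_involution[OF g]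
      by (simp add: algebra_simps)
    show "deriv f z * deriv (involution f) z = deriv g z * deriv (involution g) z"
      using deriv_prod[of z] differentiable[OF f] differentiable[OF g] by (simp add: deriv_involution)
  qed (rule prod)
  moreover have wronskian_holomorphic:
    "(\<lambda>z. deriv f z * h z - f z * deriv h z) holomorphic_on UNIV"
    if "h holomorphic_on UNIV" for h
    using f that by (intro holomorphic_intros) auto
  ultimately have "(\<forall>z. deriv f z * g z - f z * deriv g z = 0) \<or>
      (\<forall>z. deriv f z * involution g z - f z * deriv (involution g) z = 0)"
    using holomorphic_mult_eq_0_imp[OF wronskian_holomorphic[OF g]
        wronskian_holomorphic[OF holomorphic_on_involution[OF g]] open_UNIV connected_UNIV]
    by blast
  then show ?thesis by simp
qed

lemma involution_product_eq_imp_unimodular_multiple: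
  assumes "\<And>z. f z * involution f z = h z * involution h z"
    and "\<And>z. h z = c * f z" and "f z1 * involution f z1 \<noteq> 0"
  obtains \<alpha> where "norm \<alpha> = 1" "\<And>z. f z = \<alpha> * h z"
proof
  have "f z1 * involution f z1 = (c * cnj c) * (f z1 * involution f z1)"
    using assms(1,2) by (simp add: involution_def algebra_simps)
  with assms(3) have "c * cnj c = 1" by simp
  then have "complex_of_real ((norm c)\<^sup>2) = 1"
    by (simp only: complex_norm_square)
  then have "(norm c)\<^sup>2 = 1"
    by (simp only: of_real_eq_1_iff)
  then show "norm (cnj c) = 1"
    by (simp add: abs_square_eq_1)
  show "f z = cnj c * h z" for z
    using assms(2)[of z] \<open>c * cnj c = 1\<close> by (simp add: algebra_simps)
qed

theorem lemma3p3:
  fixes f g :: "complex \<Rightarrow> complex"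
  assumes "f holomorphic_on UNIV" and "g holomorphic_on UNIV"
    and "finite_order f" and "finite_order g"
    and "\<And>z. f z * involution f z = g z * involution g z"
    and "\<And>z. deriv f z * involution (deriv f) z = deriv g z * involution (deriv g) z"
  shows "\<exists>\<alpha>::complex. norm \<alpha> = 1 \<and>
           ((\<forall>z. f z = \<alpha> * g z) \<or> (\<forall>z. f z = \<alpha> * involution g z))"
proof (cases "\<forall>z. f z = 0")
  case True
  then have "\<And>z. g z = 0"
    using entire_mult_involution_eq_0_imp[OF assms(2)] assms(5) by simp
  with True show ?thesis by (intro exI[of _ 1]) simp
next
  case False
  then obtain z0 where "f z0 \<noteq> 0" by blast
  obtain z1 where z1: "f z1 * involution f z1 \<noteq> 0"
    using entire_mult_involution_eq_0_imp[OF assms(1)] False by blast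
  obtain h where h: "h = g \<or> h = involution g"
    and wronskian: "\<And>z. deriv f z * h z = f z * deriv h z"
    using entire_wronskian_eq_0_or_wronskian_involution_eq_0[OF assms(1,2,5,6)]
    by (elim disjE) (use that in blast)+
  have "h holomorphic_on UNIV"
    using h assms(2) holomorphic_on_involution[OF assms(2)] by (elim disjE) simp_all
  then obtain c where "\<And>z. h z = c * f z"
    by (rule wronskian_eq_0_imp_proportional[OF assms(1) _ open_UNIV connected_UNIV UNIV_I
          \<open>f z0 \<noteq> 0\<close>])
      (use wronskian in auto)
  moreover have "\<And>z. f z * involution f z = h z * involution h z"
    using h assms(5) by (auto simp: mult.commute)
  ultimately obtain \<alpha> where "norm \<alpha> = 1" "\<And>z. f z = \<alpha> * h z"
    using involution_product_eq_imp_unimodular_multiple[OF _ _ z1] by blast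
  with h show ?thesis by blast
qed

end
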